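(* Let $(M,d)$ be a separable metric space, $(\Omega,\mathscr{F},\mathbb{P},\theta)$ an ergodic measure-preserving dynamical system, and $\{f_\omega\}_{\omega\in\Omega}$ a family of paracontraction maps $f_\omega\colon M\to M$ with $(\omega,x)\mapsto f_\omega(x)$ measurable, and let $\varphi(n,\omega,x)=f_{\theta^{n-1}(\omega)}\circ\cdots\circ f_\omega(x)$. Let $C_\varphi=\{x\in M\colon \mathbb{P}(\{\omega\colon f_\omega(x)=x\})=1\}$ and assume $C_\varphi\neq\emptyset$. Assume moreover that for each set $U$ in some countable basis of the topology of $M$, the set $\{\omega\colon f_\omega(x)\ne x\text{ for all }x\in U\}$ is measurable. Then every $\varphi$-invariant measure $\mu$ satisfies $\mu(\Omega\times C_\varphi)=1$.
   Context: A continuous map $f\colon M\to M$ is a paracontraction if for every fixed point $x$ of $f$ and every $y$ not fixed by $f$, $d(f(y),x)<d(y,x)$. The skew product induced by $\varphi$ is $F(\omega,x)=(\theta(\omega),f_\omega(x))$. A random measure is a probability measure on $\Omega\times M$ with first marginal $\mathbb{P}$; a $\varphi$-invariant measure is a random measure invariant under $F$. An ergodic measure-preserving dynamical system is a probability space with a measurable measure-preserving map $\theta$ such that every measurable $A$ with $\theta^{-1}(A)\subset A$ has measure $0$ or $1$. *)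

theory Defs
  imports "HOL-Probability.Probability"
begin

definition paracontraction :: "('b::metric_space \<Rightarrow> 'b) \<Rightarrow> bool" where
  "paracontraction f \<longleftrightarrow> continuous_on UNIV f \<and>
     (\<forall>x y. f x = x \<longrightarrow> f y \<noteq> y \<longrightarrow> dist (f y) x < dist y x)"

definition ergodic_mpds :: "'a measure \<Rightarrow> ('a \<Rightarrow> 'a) \<Rightarrow> bool" where
  "ergodic_mpds P \<theta> \<longleftrightarrow> prob_space P \<and> \<theta> \<in> measurable P P \<and> distr P P \<theta> = P \<and>
     (\<forall>A \<in> sets P. \<theta> -` A \<inter> space P \<subseteq> A \<longrightarrow> measure P A = 0 \<or> measure P A = 1)"

definition skew_product :: "('a \<Rightarrow> 'a) \<Rightarrow> ('a \<Rightarrow> 'b \<Rightarrow> 'b) \<Rightarrow> 'a \<times> 'b \<Rightarrow> 'a \<times> 'b" where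
  "skew_product \<theta> f = (\<lambda>(\<omega>, x). (\<theta> \<omega>, f \<omega> x))"

definition random_measure :: "'a measure \<Rightarrow> ('a \<times> 'b::topological_space) measure \<Rightarrow> bool" where
  "random_measure P \<mu> \<longleftrightarrow> prob_space \<mu> \<and> sets \<mu> = sets (P \<Otimes>\<^sub>M borel) \<and> distr \<mu> P fst = P"

definition invariant_measure ::
  "'a measure \<Rightarrow> ('a \<Rightarrow> 'a) \<Rightarrow> ('a \<Rightarrow> 'b::topological_space \<Rightarrow> 'b) \<Rightarrow> ('a \<times> 'b) measure \<Rightarrow> bool" where
  "invariant_measure P \<theta> f \<mu> \<longleftrightarrow> random_measure P \<mu> \<and>
     distr \<mu> (P \<Otimes>\<^sub>M borel) (skew_product \<theta> f) = \<mu>"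

definition C_phi :: "'a measure \<Rightarrow> ('a \<Rightarrow> 'b \<Rightarrow> 'b) \<Rightarrow> 'b set" where
  "C_phi P f = {x. measure P {\<omega> \<in> space P. f \<omega> x = x} = 1}"

end

(* Fix c in C_phi. Since f_omega c = c almost surely, paracontraction makes arctan d(x, c)
   non-increasing along the skew product, strictly so where f_omega x ~= x; as mu is invariant
   and the function is bounded, it is invariant mu-a.e., so f_omega x = x for mu-a.e. (omega, x).
   Transporting this along the skew product, mu-a.e. x is fixed by every f_(theta^n omega).
   If x were not in C_phi, continuity would give a basic neighbourhood U of x moved pointwise by
   f_omega for omega in a set of positive probability, and by ergodicity almost every orbit
   theta^n omega enters that set: a contradiction. *)
theory Submission
  imports Defs
begin

text \<open>The library's \<open>measurable_equality_set\<close> needs \<open>second_countable_topology\<close> as a type class;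
  here the countable basis is given as data.\<close>
lemma measurable_equality_set_countable_basis:
  fixes u v :: "'m \<Rightarrow> 'b::t2_space" and B :: "'b set set"
  assumes B: "countable B" "topological_basis B"
    and u: "u \<in> borel_measurable M" and v: "v \<in> borel_measurable M"
  shows "{x \<in> space M. u x = v x} \<in> sets M"
proof -
  let ?I = "{(U, V). U \<in> B \<and> V \<in> B \<and> U \<inter> V = {}}"
  have "countable ?I"
    by (rule countable_subset[of _ "B \<times> B"]) (use B in auto)
  have open_B: "\<And>U. U \<in> B \<Longrightarrow> open U"
    using B(2) by (rule topological_basis_open)
  have neq: "{x \<in> space M. u x \<noteq> v x} = (\<Union>(U, V)\<in>?I. u -` U \<inter> v -` V \<inter> space M)"
  proof (intro equalityI subsetI)
    fix x assume x: "x \<in> {x \<in> space M. u x \<noteq> v x}"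
    then obtain S T where ST: "open S" "open T" "u x \<in> S" "v x \<in> T" "S \<inter> T = {}"
      using hausdorff[of "u x" "v x"] by auto
    obtain U where "U \<in> B" "u x \<in> U" "U \<subseteq> S" using topological_basisE[OF B(2) ST(1,3)] by metis
    moreover obtain V where "V \<in> B" "v x \<in> V" "V \<subseteq> T" using topological_basisE[OF B(2) ST(2,4)] by metis
    ultimately show "x \<in> (\<Union>(U, V)\<in>?I. u -` U \<inter> v -` V \<inter> space M)"
      using x ST(5) by blast
  qed auto
  have "(\<Union>(U, V)\<in>?I. u -` U \<inter> v -` V \<inter> space M) \<in> sets M"
  proof (rule sets.countable_UN'[OF \<open>countable ?I\<close>], safe)
    fix U V assume "U \<in> B" "V \<in> B"
    then have "u -` U \<inter> space M \<in> sets M" "v -` V \<inter> space M \<in> sets M"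
      using measurable_sets[OF u borel_open[OF open_B]] measurable_sets[OF v borel_open[OF open_B]]
      by auto
    then have "(u -` U \<inter> space M) \<inter> (v -` V \<inter> space M) \<in> sets M" by blast
    then show "u -` U \<inter> v -` V \<inter> space M \<in> sets M" by (simp add: Int_assoc Int_left_commute)
  qed
  then have "space M - {x \<in> space M. u x \<noteq> v x} \<in> sets M" using neq by auto
  moreover have "space M - {x \<in> space M. u x \<noteq> v x} = {x \<in> space M. u x = v x}" by auto
  ultimately show ?thesis by simp
qed

text \<open>The integral of the nonnegative difference \<open>V - V \<circ> T\<close> vanishes.\<close>
lemma AE_eq_if_AE_le_measure_preserving:
  fixes V :: "'a \<Rightarrow> real"
  assumes "finite_measure \<mu>" and T: "T \<in> measurable \<mu> N" and preserving: "distr \<mu> N T = \<mu>"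
    and V: "V \<in> borel_measurable \<mu>" and bounded: "\<And>z. \<bar>V z\<bar> \<le> K"
    and le: "AE z in \<mu>. V (T z) \<le> V z"
  shows "AE z in \<mu>. V (T z) = V z"
proof -
  interpret finite_measure \<mu> by fact
  have "sets N = sets \<mu>"
    using sets_distr[of \<mu> N T] preserving by simp
  then have V_N: "V \<in> borel_measurable N"
    using V measurable_cong_sets[of N \<mu> borel borel] by simp
  have VT: "(\<lambda>z. V (T z)) \<in> borel_measurable \<mu>"
    using measurable_comp[OF T V_N] by (simp add: comp_def)
  have int_V: "integrable \<mu> V"
    using V bounded by (intro integrable_const_bound[where B=K] AE_I2) auto
  have int_VT: "integrable \<mu> (\<lambda>z. V (T z))"
    using VT bounded by (intro integrable_const_bound[where B=K] AE_I2) auto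
  have "integral\<^sup>L \<mu> V = integral\<^sup>L (distr \<mu> N T) V"
    by (simp add: preserving)
  also have "\<dots> = integral\<^sup>L \<mu> (\<lambda>z. V (T z))"
    by (rule integral_distr[OF T V_N])
  finally have "integral\<^sup>L \<mu> (\<lambda>z. V z - V (T z)) = 0"
    using int_V int_VT by simp
  moreover have "AE z in \<mu>. 0 \<le> V z - V (T z)"
    using le by eventually_elim simp
  ultimately have "AE z in \<mu>. V z - V (T z) = 0"
    using integral_nonneg_eq_0_iff_AE[OF Bochner_Integration.integrable_diff[OF int_V int_VT]] by blast
  then show ?thesis by eventually_elim simp
qed

lemma skew_product_apply: "skew_product \<theta> f z = (\<theta> (fst z), f (fst z) (snd z))"
  by (cases z) (simp add: skew_product_def)

lemma measurable_skew_product: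
  assumes "\<theta> \<in> measurable P P" and "(\<lambda>(\<omega>, x). f \<omega> x) \<in> borel_measurable (P \<Otimes>\<^sub>M borel)"
  shows "skew_product \<theta> f \<in> measurable (P \<Otimes>\<^sub>M borel) (P \<Otimes>\<^sub>M borel)"
  using assms unfolding skew_product_def by measurable

lemma AE_fst_in_if_random_measure:
  assumes "random_measure P \<mu>" and A: "measure P A = 1"
  shows "AE z in \<mu>. fst z \<in> A"
proof -
  have "prob_space \<mu>" and marginal: "distr \<mu> P fst = P" and "sets \<mu> = sets (P \<Otimes>\<^sub>M borel)"
    using assms(1) unfolding random_measure_def by auto
  then have fst: "fst \<in> measurable \<mu> P"
    using measurable_cong_sets[of \<mu> "P \<Otimes>\<^sub>M borel" P P] by simp
  interpret P: prob_space P
    using prob_space.prob_space_distr[OF \<open>prob_space \<mu>\<close> fst] by (simp add: marginal)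
  have "A \<in> sets P"
    using A by (metis measure_notin_sets zero_neq_one)
  then have "{\<omega> \<in> space P. \<omega> \<in> A} \<in> sets P" by simp
  moreover have "AE \<omega> in distr \<mu> P fst. \<omega> \<in> A"
    unfolding marginal by (rule P.AE_prob_1[OF A])
  ultimately show ?thesis
    by (simp add: AE_distr_iff[OF fst])
qed

lemma AE_fixed_if_invariant_measure:
  fixes f :: "'a \<Rightarrow> 'b::metric_space \<Rightarrow> 'b"
  assumes \<theta>: "\<theta> \<in> measurable P P"
    and para: "\<forall>\<omega> \<in> space P. paracontraction (f \<omega>)"
    and meas: "(\<lambda>(\<omega>, x). f \<omega> x) \<in> borel_measurable (P \<Otimes>\<^sub>M borel)"
    and c: "c \<in> C_phi P f"
    and inv: "invariant_measure P \<theta> f \<mu>"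
  shows "AE z in \<mu>. f (fst z) (snd z) = snd z"
proof -
  have "random_measure P \<mu>" and preserving: "distr \<mu> (P \<Otimes>\<^sub>M borel) (skew_product \<theta> f) = \<mu>"
    using inv unfolding invariant_measure_def by auto
  then have "prob_space \<mu>" and sets_\<mu>: "sets \<mu> = sets (P \<Otimes>\<^sub>M borel)"
    unfolding random_measure_def by auto
  have F: "skew_product \<theta> f \<in> measurable \<mu> (P \<Otimes>\<^sub>M borel)"
    unfolding measurable_cong_sets[OF sets_\<mu> refl] by (rule measurable_skew_product[OF \<theta> meas])
  txt \<open>Composing with arctan makes the distance to \<open>c\<close> bounded, hence integrable.\<close>
  define V where "V = (\<lambda>z :: 'a \<times> 'b. arctan (dist (snd z) c))"
  have "(\<lambda>x. arctan (dist x c)) \<in> borel_measurable borel"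
    by (intro borel_measurable_continuous_onI continuous_intros)
  then have V: "V \<in> borel_measurable \<mu>"
    unfolding measurable_cong_sets[OF sets_\<mu> refl] V_def by (rule measurable_compose[OF measurable_snd])
  have fixes_c: "AE z in \<mu>. fst z \<in> {\<omega> \<in> space P. f \<omega> c = c}"
    using c unfolding C_phi_def by (intro AE_fst_in_if_random_measure[OF \<open>random_measure P \<mu>\<close>]) simp
  have decreasing: "V (skew_product \<theta> f z) < V z"
    if "fst z \<in> space P" "f (fst z) c = c" "f (fst z) (snd z) \<noteq> snd z" for z
    using para that by (auto simp: V_def skew_product_apply paracontraction_def arctan_less_iff)
  have non_increasing: "V (skew_product \<theta> f z) \<le> V z" if "fst z \<in> space P" "f (fst z) c = c" for z
    using decreasing[OF that] by (cases "f (fst z) (snd z) = snd z") (auto simp: V_def skew_product_apply)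
  have "AE z in \<mu>. V (skew_product \<theta> f z) = V z"
  proof (rule AE_eq_if_AE_le_measure_preserving[OF _ F preserving V])
    show "finite_measure \<mu>"
      using \<open>prob_space \<mu>\<close> by (simp add: prob_space_def)
    show "\<bar>V z\<bar> \<le> pi / 2" for z
      using arctan_bounded[of "dist (snd z) c"] by (simp add: V_def)
    show "AE z in \<mu>. V (skew_product \<theta> f z) \<le> V z"
      using fixes_c by eventually_elim (simp add: non_increasing)
  qed
  then show ?thesis
    using fixes_c by eventually_elim (metis (mono_tags) decreasing less_irrefl mem_Collect_eq)
qed

lemma AE_fixed_along_orbit_if_invariant_measure:
  fixes f :: "'a \<Rightarrow> 'b::t2_space \<Rightarrow> 'b" and B :: "'b set set"
  assumes \<theta>: "\<theta> \<in> measurable P P"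
    and meas: "(\<lambda>(\<omega>, x). f \<omega> x) \<in> borel_measurable (P \<Otimes>\<^sub>M borel)"
    and B: "countable B" "topological_basis B"
    and inv: "invariant_measure P \<theta> f \<mu>"
    and fixed: "AE z in \<mu>. f (fst z) (snd z) = snd z"
  shows "AE z in \<mu>. \<forall>n. f ((\<theta> ^^ n) (fst z)) (snd z) = snd z"
proof -
  have preserving: "distr \<mu> (P \<Otimes>\<^sub>M borel) (skew_product \<theta> f) = \<mu>"
    and sets_\<mu>: "sets \<mu> = sets (P \<Otimes>\<^sub>M borel)"
    using inv unfolding invariant_measure_def random_measure_def by auto
  have F: "skew_product \<theta> f \<in> measurable \<mu> (P \<Otimes>\<^sub>M borel)"
    unfolding measurable_cong_sets[OF sets_\<mu> refl] by (rule measurable_skew_product[OF \<theta> meas])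
  have "AE z in \<mu>. f ((\<theta> ^^ n) (fst z)) (snd z) = snd z" for n
  proof (induction n)
    case 0
    then show ?case using fixed by simp
  next
    case (Suc n)
    have "(\<lambda>z. f ((\<theta> ^^ n) (fst z)) (snd z)) \<in> borel_measurable (P \<Otimes>\<^sub>M borel)"
      using meas measurable_compose_n[OF \<theta>] by measurable
    then have "{z \<in> space (P \<Otimes>\<^sub>M borel). f ((\<theta> ^^ n) (fst z)) (snd z) = snd z} \<in> sets (P \<Otimes>\<^sub>M borel)"
      using measurable_equality_set_countable_basis[OF B] measurable_snd by blast
    moreover have "AE z in distr \<mu> (P \<Otimes>\<^sub>M borel) (skew_product \<theta> f). f ((\<theta> ^^ n) (fst z)) (snd z) = snd z"
      unfolding preserving by (rule Suc)
    ultimately have "AE z in \<mu>. f ((\<theta> ^^ n) (fst (skew_product \<theta> f z))) (snd (skew_product \<theta> f z))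
        = snd (skew_product \<theta> f z)"
      by (simp add: AE_distr_iff[OF F])
    then show ?case
      using fixed by eventually_elim (simp add: skew_product_apply funpow_swap1)
  qed
  then show ?thesis
    by (simp add: AE_all_countable)
qed

text \<open>The set of orbits that ever enter \<open>A\<close> is backward invariant, so ergodicity forces it to
  have measure \<open>0\<close> or \<open>1\<close>, and it contains \<open>A\<close>.\<close>
lemma ergodic_mpds_measure_orbit_hits:
  assumes erg: "ergodic_mpds P \<theta>" and A: "measure P A > 0"
  shows "measure P {\<omega> \<in> space P. \<exists>n. (\<theta> ^^ n) \<omega> \<in> A} = 1"
proof -
  let ?H = "{\<omega> \<in> space P. \<exists>n. (\<theta> ^^ n) \<omega> \<in> A}"
  have "prob_space P" and \<theta>: "\<theta> \<in> measurable P P"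
    and invariant_trivial: "\<And>S. S \<in> sets P \<Longrightarrow> \<theta> -` S \<inter> space P \<subseteq> S \<Longrightarrow> measure P S = 0 \<or> measure P S = 1"
    using erg unfolding ergodic_mpds_def by auto
  have "A \<in> sets P"
    using A measure_notin_sets by fastforce
  have "?H = (\<Union>n. (\<theta> ^^ n) -` A \<inter> space P)"
    by auto
  also have "\<dots> \<in> sets P"
    using measurable_sets[OF measurable_compose_n[OF \<theta>] \<open>A \<in> sets P\<close>] by blast
  finally have H: "?H \<in> sets P" .
  have "\<theta> -` ?H \<inter> space P \<subseteq> ?H"
  proof
    fix \<omega> assume "\<omega> \<in> \<theta> -` ?H \<inter> space P"
    then obtain n where "(\<theta> ^^ Suc n) \<omega> \<in> A" "\<omega> \<in> space P"
      by (auto simp: funpow_swap1)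
    then show "\<omega> \<in> ?H" by blast
  qed
  moreover have "measure P A \<le> measure P ?H"
  proof (rule finite_measure.finite_measure_mono)
    show "A \<subseteq> ?H"
      using sets.sets_into_space[OF \<open>A \<in> sets P\<close>] by (force intro: exI[of _ 0])
  qed (use \<open>prob_space P\<close> H in \<open>auto simp: prob_space_def\<close>)
  ultimately show ?thesis
    using invariant_trivial[OF H] A by auto
qed

definition fixpoint_free_set :: "'a measure \<Rightarrow> ('a \<Rightarrow> 'b \<Rightarrow> 'b) \<Rightarrow> 'b set \<Rightarrow> 'a set" where
  "fixpoint_free_set P f U = {\<omega> \<in> space P. \<forall>x \<in> U. f \<omega> x \<noteq> x}"

lemma sets_fixed_set:
  fixes f :: "'a \<Rightarrow> 'b::t2_space \<Rightarrow> 'b" and B :: "'b set set"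
  assumes meas: "(\<lambda>(\<omega>, x). f \<omega> x) \<in> borel_measurable (P \<Otimes>\<^sub>M borel)"
    and B: "countable B" "topological_basis B"
  shows "{\<omega> \<in> space P. f \<omega> x = x} \<in> sets P"
proof -
  have "(\<lambda>\<omega>. f \<omega> x) \<in> borel_measurable P"
    using meas by measurable
  then show ?thesis
    using measurable_equality_set_countable_basis[OF B, of "\<lambda>\<omega>. f \<omega> x" P "\<lambda>_. x"] by simp
qed

text \<open>Off \<open>C_phi\<close>, the maps move \<open>x\<close> with positive probability; by continuity each such map moves a
  whole basic neighbourhood of \<open>x\<close>, and countably many neighbourhoods suffice.\<close>
lemma not_in_C_phi_imp_fixpoint_free_nbhd:
  fixes f :: "'a \<Rightarrow> 'b::t2_space \<Rightarrow> 'b" and B :: "'b set set"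
  assumes "prob_space P" and cont: "\<forall>\<omega> \<in> space P. continuous_on UNIV (f \<omega>)"
    and meas: "(\<lambda>(\<omega>, x). f \<omega> x) \<in> borel_measurable (P \<Otimes>\<^sub>M borel)"
    and B: "countable B" "topological_basis B" "\<forall>U \<in> B. fixpoint_free_set P f U \<in> sets P"
    and x: "x \<notin> C_phi P f"
  shows "\<exists>U \<in> B. x \<in> U \<and> measure P (fixpoint_free_set P f U) > 0"
proof (rule ccontr)
  interpret prob_space P by fact
  assume no_nbhd: "\<not> ?thesis"
  have null: "fixpoint_free_set P f U \<in> null_sets P" if "U \<in> B" "x \<in> U" for U
  proof -
    from no_nbhd that have "\<not> measure P (fixpoint_free_set P f U) > 0" by blast
    then have "measure P (fixpoint_free_set P f U) = 0"
      using measure_nonneg[of P "fixpoint_free_set P f U"] by linarith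
    then show ?thesis
      using that B(3) by (simp add: null_sets_def emeasure_eq_measure)
  qed
  let ?E = "{\<omega> \<in> space P. f \<omega> x = x}"
  have E: "?E \<in> sets P"
    using sets_fixed_set[OF meas B(1,2)] .
  have cover: "space P - ?E \<subseteq> (\<Union>U \<in> {U \<in> B. x \<in> U}. fixpoint_free_set P f U)"
  proof
    fix \<omega> assume \<omega>: "\<omega> \<in> space P - ?E"
    then have "continuous_on UNIV (f \<omega>)"
      using cont by blast
    then have "open {y. f \<omega> y \<noteq> y}"
      using open_Collect_neq[OF _ continuous_on_id] by simp
    moreover have "x \<in> {y. f \<omega> y \<noteq> y}"
      using \<omega> by simp
    ultimately obtain U where "U \<in> B" "x \<in> U" "U \<subseteq> {y. f \<omega> y \<noteq> y}"
      by (rule topological_basisE[OF B(2)])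
    then show "\<omega> \<in> (\<Union>U \<in> {U \<in> B. x \<in> U}. fixpoint_free_set P f U)"
      using \<omega> by (auto simp: fixpoint_free_set_def)
  qed
  have "(\<Union>U \<in> {U \<in> B. x \<in> U}. fixpoint_free_set P f U) \<in> null_sets P"
    using B(1) null by (intro null_sets_UN') auto
  then have "space P - ?E \<in> null_sets P"
    by (rule null_sets_subset[OF _ sets.compl_sets[OF E] cover])
  then have "measure P ?E = 1"
    using prob_compl[OF E] by (simp add: null_sets_def emeasure_eq_measure)
  then show False
    using x unfolding C_phi_def by simp
qed

lemma AE_in_C_phi_if_fixed_along_orbit:
  fixes f :: "'a \<Rightarrow> 'b::t2_space \<Rightarrow> 'b" and B :: "'b set set"
  assumes erg: "ergodic_mpds P \<theta>" and cont: "\<forall>\<omega> \<in> space P. continuous_on UNIV (f \<omega>)"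
    and meas: "(\<lambda>(\<omega>, x). f \<omega> x) \<in> borel_measurable (P \<Otimes>\<^sub>M borel)"
    and B: "countable B" "topological_basis B" "\<forall>U \<in> B. fixpoint_free_set P f U \<in> sets P"
    and \<mu>: "random_measure P \<mu>"
    and orbit: "AE z in \<mu>. \<forall>n. f ((\<theta> ^^ n) (fst z)) (snd z) = snd z"
  shows "AE z in \<mu>. snd z \<in> C_phi P f"
proof -
  have "prob_space P"
    using erg unfolding ergodic_mpds_def by simp
  define K where "K = {U \<in> B. measure P (fixpoint_free_set P f U) > 0}"
  have "AE z in \<mu>. \<forall>U \<in> K. fst z \<in> {\<omega> \<in> space P. \<exists>n. (\<theta> ^^ n) \<omega> \<in> fixpoint_free_set P f U}"
  proof (rule AE_ball_countable')
    fix U assume "U \<in> K"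
    then have "measure P (fixpoint_free_set P f U) > 0"
      by (simp add: K_def)
    then show "AE z in \<mu>. fst z \<in> {\<omega> \<in> space P. \<exists>n. (\<theta> ^^ n) \<omega> \<in> fixpoint_free_set P f U}"
      by (intro AE_fst_in_if_random_measure[OF \<mu>] ergodic_mpds_measure_orbit_hits[OF erg])
  next
    show "countable K"
      using B(1) unfolding K_def by simp
  qed
  then show ?thesis
    using orbit
  proof eventually_elim
    case (elim z)
    show ?case
    proof (rule ccontr)
      assume "snd z \<notin> C_phi P f"
      then obtain U where "U \<in> K" "snd z \<in> U"
        using not_in_C_phi_imp_fixpoint_free_nbhd[OF \<open>prob_space P\<close> cont meas B] by (auto simp: K_def)
      then obtain n where "(\<theta> ^^ n) (fst z) \<in> fixpoint_free_set P f U"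
        using elim(1) by blast
      then show False
        using elim(2) \<open>snd z \<in> U\<close> by (auto simp: fixpoint_free_set_def)
    qed
  qed
qed

lemma C_phi_borel:
  fixes f :: "'a \<Rightarrow> 'b::t2_space \<Rightarrow> 'b" and B :: "'b set set"
  assumes "prob_space P"
    and meas: "(\<lambda>(\<omega>, x). f \<omega> x) \<in> borel_measurable (P \<Otimes>\<^sub>M borel)"
    and B: "countable B" "topological_basis B"
  shows "C_phi P f \<in> sets borel"
proof -
  interpret prob_space P by fact
  have "(\<lambda>z. f (snd z) (fst z)) \<in> borel_measurable (borel \<Otimes>\<^sub>M P)"
    using meas by measurable
  then have "{z \<in> space (borel \<Otimes>\<^sub>M P). f (snd z) (fst z) = fst z} \<in> sets (borel \<Otimes>\<^sub>M P)"
    using measurable_equality_set_countable_basis[OF B _ measurable_fst] by blast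
  moreover have "{z \<in> space (borel \<Otimes>\<^sub>M P). snd z \<in> {\<omega> \<in> space P. f \<omega> (fst z) = fst z}}
      = {z \<in> space (borel \<Otimes>\<^sub>M P). f (snd z) (fst z) = fst z}"
    by (auto simp: space_pair_measure)
  ultimately have "{z \<in> space (borel \<Otimes>\<^sub>M P). snd z \<in> {\<omega> \<in> space P. f \<omega> (fst z) = fst z}} \<in> sets (borel \<Otimes>\<^sub>M P)"
    by simp
  then have "(\<lambda>x. measure P {\<omega> \<in> space P. f \<omega> x = x}) \<in> borel_measurable borel"
    by (intro measurable_measure) auto
  then have "(\<lambda>x. measure P {\<omega> \<in> space P. f \<omega> x = x}) -` {1} \<inter> space borel \<in> sets borel"
    by (rule measurable_sets) simp
  then show ?thesis
    by (simp add: C_phi_def vimage_def)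
qed

lemma measure_times_eq_1_if_AE_snd_in:
  assumes \<mu>: "random_measure P \<mu>" and C: "C \<in> sets borel" and AE: "AE z in \<mu>. snd z \<in> C"
  shows "measure \<mu> (space P \<times> C) = 1"
proof -
  have "prob_space \<mu>" and sets_\<mu>: "sets \<mu> = sets (P \<Otimes>\<^sub>M borel)"
    using \<mu> unfolding random_measure_def by auto
  have space_\<mu>: "space \<mu> = space P \<times> UNIV"
    using sets_eq_imp_space_eq[OF sets_\<mu>] by (simp add: space_pair_measure)
  have "AE z in \<mu>. z \<in> space P \<times> C"
    using AE_space AE by eventually_elim (auto simp: space_\<mu>)
  moreover have "space P \<times> C \<in> sets \<mu>"
    unfolding sets_\<mu> using C by (intro pair_measureI) auto
  ultimately show ?thesis
    using prob_space.AE_in_set_eq_1[OF \<open>prob_space \<mu>\<close>] by blast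
qed

theorem mainTheorem7:
  fixes P :: "'a measure" and \<theta> :: "'a \<Rightarrow> 'a" and f :: "'a \<Rightarrow> 'b::metric_space \<Rightarrow> 'b"
  assumes sep: "separable_space (euclidean :: 'b topology)"
    and erg: "ergodic_mpds P \<theta>"
    and para: "\<forall>\<omega> \<in> space P. paracontraction (f \<omega>)"
    and meas: "(\<lambda>(\<omega>, x). f \<omega> x) \<in> borel_measurable (P \<Otimes>\<^sub>M borel)"
    and nonempty: "C_phi P f \<noteq> {}"
    and basis: "\<exists>B. countable B \<and> topological_basis B \<and>
                  (\<forall>U \<in> B. {\<omega> \<in> space P. \<forall>x \<in> U. f \<omega> x \<noteq> x} \<in> sets P)"
    and inv: "invariant_measure P \<theta> f \<mu>"
  shows "measure \<mu> (space P \<times> C_phi P f) = 1"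
proof -
  obtain B where B: "countable B" "topological_basis B" "\<forall>U \<in> B. fixpoint_free_set P f U \<in> sets P"
    using basis unfolding fixpoint_free_set_def by blast
  obtain c where c: "c \<in> C_phi P f"
    using nonempty by blast
  have "prob_space P" and \<theta>: "\<theta> \<in> measurable P P"
    using erg unfolding ergodic_mpds_def by auto
  have \<mu>: "random_measure P \<mu>"
    using inv unfolding invariant_measure_def by simp
  have cont: "\<forall>\<omega> \<in> space P. continuous_on UNIV (f \<omega>)"
    using para unfolding paracontraction_def by blast
  have "AE z in \<mu>. f (fst z) (snd z) = snd z"
    using AE_fixed_if_invariant_measure[OF \<theta> para meas c inv] .
  then have "AE z in \<mu>. \<forall>n. f ((\<theta> ^^ n) (fst z)) (snd z) = snd z"
    using AE_fixed_along_orbit_if_invariant_measure[OF \<theta> meas B(1,2) inv] by blast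
  then have "AE z in \<mu>. snd z \<in> C_phi P f"
    by (rule AE_in_C_phi_if_fixed_along_orbit[OF erg cont meas B \<mu>])
  then show ?thesis
    by (rule measure_times_eq_1_if_AE_snd_in[OF \<mu> C_phi_borel[OF \<open>prob_space P\<close> meas B(1,2)]])
qed

end
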